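(* Let $k\ge1$ be an integer and $\alpha>\beta>0$. Then $$ \Big[-qs-\tfrac23\sqrt{(1-q^2)(1-s^2)},\,-qs\Big]\subset\mathcal J=(\gamma_{-1},\gamma_1). $$
   Context: Put $\eta=\alpha-\beta$, $\sigma=\alpha+\beta$, $r=2k+\alpha+\beta+1$, $\rho=r-1$, $q=\eta/r$, $s=\sigma/r$, and $\gamma_j=\frac{j\sqrt{(\rho^2-\eta^2)(\rho^2-\sigma^2)}-\eta\sigma}{\rho^2}$ for $j=\pm1$. *)

theory Defs
  imports Complex_Main
begin

definition eta :: "real \<Rightarrow> real \<Rightarrow> real" where "eta a b = a - b"
definition sigma :: "real \<Rightarrow> real \<Rightarrow> real" where "sigma a b = a + b"
definition rr :: "nat \<Rightarrow> real \<Rightarrow> real \<Rightarrow> real" where "rr k a b = 2 * real k + a + b + 1"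
definition rho :: "nat \<Rightarrow> real \<Rightarrow> real \<Rightarrow> real" where "rho k a b = rr k a b - 1"
definition qq :: "nat \<Rightarrow> real \<Rightarrow> real \<Rightarrow> real" where "qq k a b = eta a b / rr k a b"
definition ss :: "nat \<Rightarrow> real \<Rightarrow> real \<Rightarrow> real" where "ss k a b = sigma a b / rr k a b"

definition gam :: "int \<Rightarrow> nat \<Rightarrow> real \<Rightarrow> real \<Rightarrow> real" where
  "gam j k a b =
     (real_of_int j * sqrt ((rho k a b ^ 2 - eta a b ^ 2) * (rho k a b ^ 2 - sigma a b ^ 2))
        - eta a b * sigma a b) / rho k a b ^ 2"

end

theory Submission
  imports Defs
begin

(* With a = \<eta>/\<rho> and b = \<sigma>/\<rho>, the endpoints of \<J> are
  \<gamma>\<^sub>j = j sqrt((1 - a\<^sup>2)(1 - b\<^sup>2)) - ab, while q and s are the same ratios with \<rho>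
  replaced by r = \<rho> + 1. Since 0 < \<eta> < \<sigma> \<le> \<rho> - 2, the right endpoint -qs exceeds -ab by
  less than 1 - b\<^sup>2 \<le> sqrt((1 - a\<^sup>2)(1 - b\<^sup>2)). For the left endpoint, -qs \<ge> -ab, and multiplying
  the estimate 2(1 - t\<^sup>2/r\<^sup>2) < 3(1 - t\<^sup>2/\<rho>\<^sup>2) for t = \<eta>, \<sigma> gives
  (2/3) sqrt((1 - q\<^sup>2)(1 - s\<^sup>2)) < sqrt((1 - a\<^sup>2)(1 - b\<^sup>2)). *)

lemma square_mult_less_square_mult_succ_square:
  fixes t x :: real
  assumes "0 \<le> t" "t + 2 \<le> x"
  shows "t^2 * (x^2 + 6*x + 3) < x^2 * (x + 1)^2"
proof -
  have "t^2 \<le> (x - 2)^2" using assms by (intro power_mono) auto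
  then have "t^2 * (x^2 + 6*x + 3) \<le> (x - 2)^2 * (x^2 + 6*x + 3)"
    using assms by (intro mult_right_mono) auto
  also have "\<dots> = x^2 * (x + 1)^2 - (18*x^2 - 12*x - 12)"
    by (simp add: power2_eq_square algebra_simps)
  also have "\<dots> < x^2 * (x + 1)^2"
  proof -
    have "2 * x \<le> x * x" using assms by (intro mult_right_mono) auto
    then show ?thesis using assms unfolding power2_eq_square by linarith
  qed
  finally show ?thesis .
qed

lemma one_minus_square_ratio_succ_less:
  fixes t x :: real
  assumes "0 \<le> t" "t + 2 \<le> x"
  shows "2 * (1 - (t / (x + 1))^2) < 3 * (1 - (t / x)^2)"
proof -
  have x: "0 < x" using assms by linarith
  have "2 * (x^2 * ((x + 1)^2 - t^2)) < 3 * ((x + 1)^2 * (x^2 - t^2))"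
    using square_mult_less_square_mult_succ_square[OF assms]
    by (simp add: power2_eq_square algebra_simps)
  then show ?thesis
    using x by (simp add: power_divide diff_divide_distrib[symmetric] field_simps)
qed

lemma square_ratio_diff_less:
  fixes t x :: real
  assumes "0 \<le> t" "t + 2 \<le> x"
  shows "(t / x)^2 - (t / (x + 1))^2 < 1 - (t / x)^2"
proof -
  have x: "0 < x" using assms by linarith
  have "t^2 * (x^2 + 4*x + 2) \<le> t^2 * (x^2 + 6*x + 3)"
    using x by (intro mult_left_mono) auto
  also have "\<dots> < x^2 * (x + 1)^2"
    by (rule square_mult_less_square_mult_succ_square[OF assms])
  finally have "t^2 * ((x + 1)^2 - x^2) < (x + 1)^2 * (x^2 - t^2)"
    by (simp add: power2_eq_square algebra_simps)
  then have "t^2 * ((x + 1)^2 - x^2) / (x^2 * (x + 1)^2)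
      < (x + 1)^2 * (x^2 - t^2) / (x^2 * (x + 1)^2)"
    using x by (intro divide_strict_right_mono) auto
  moreover have "t^2 * ((x + 1)^2 - x^2) / (x^2 * (x + 1)^2) = (t / x)^2 - (t / (x + 1))^2"
    using x by (simp add: power_divide field_simps)
  ultimately show ?thesis
    using x by (simp add: power_divide diff_divide_distrib)
qed

lemma right_endpoint_less_gamma_plus:
  fixes e s x :: real
  assumes "0 < e" "e < s" "s + 2 \<le> x"
  shows "- (e / (x + 1)) * (s / (x + 1)) < sqrt ((1 - (e / x)^2) * (1 - (s / x)^2)) - e / x * (s / x)"
proof -
  have x: "0 < x" using assms by linarith
  have "e / x * (s / x) - e / (x + 1) * (s / (x + 1)) = e * s * (1 / x^2 - 1 / (x + 1)^2)"
    by (simp add: power2_eq_square algebra_simps)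
  also have "\<dots> \<le> s * s * (1 / x^2 - 1 / (x + 1)^2)"
    using assms x by (intro mult_right_mono) (auto intro!: divide_left_mono power_mono)
  also have "\<dots> = (s / x)^2 - (s / (x + 1))^2"
    by (simp add: power2_eq_square algebra_simps)
  also have "\<dots> < 1 - (s / x)^2"
    using assms by (intro square_ratio_diff_less) auto
  also have "\<dots> \<le> sqrt ((1 - (e / x)^2) * (1 - (s / x)^2))"
  proof (rule real_le_rsqrt)
    have "(e / x)^2 \<le> (s / x)^2" "(s / x)^2 \<le> 1"
      using assms x by (auto intro!: power_mono divide_right_mono simp: power_le_one_iff)
    then show "(1 - (s / x)^2)^2 \<le> (1 - (e / x)^2) * (1 - (s / x)^2)"
      unfolding power2_eq_square[of "1 - (s / x)^2"] by (intro mult_right_mono) auto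
  qed
  finally show ?thesis by linarith
qed

lemma gamma_minus_less_left_endpoint:
  fixes e s x :: real
  assumes "0 < e" "e < s" "s + 2 \<le> x"
  shows "- sqrt ((1 - (e / x)^2) * (1 - (s / x)^2)) - e / x * (s / x)
    < - (e / (x + 1)) * (s / (x + 1)) - 2/3 * sqrt ((1 - (e / (x + 1))^2) * (1 - (s / (x + 1))^2))"
proof -
  have x: "0 < x" using assms by linarith
  have "e / (x + 1) * (s / (x + 1)) \<le> e / x * (s / x)"
    using assms x by (intro mult_mono divide_left_mono) auto
  moreover have "2 * sqrt ((1 - (e / (x + 1))^2) * (1 - (s / (x + 1))^2))
      < 3 * sqrt ((1 - (e / x)^2) * (1 - (s / x)^2))"
  proof -
    have e_bound: "2 * (1 - (e / (x + 1))^2) < 3 * (1 - (e / x)^2)"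
      by (rule one_minus_square_ratio_succ_less) (use assms in linarith)+
    have s_bound: "2 * (1 - (s / (x + 1))^2) < 3 * (1 - (s / x)^2)"
      by (rule one_minus_square_ratio_succ_less) (use assms in linarith)+
    have "(e / (x + 1))^2 \<le> 1" "(s / (x + 1))^2 \<le> 1"
      using assms x by (auto simp: power_le_one_iff)
    then have "0 < 3 * (1 - (e / x)^2)" and "0 \<le> 2 * (1 - (s / (x + 1))^2)"
      using e_bound by simp_all
    then have "(2 * (1 - (e / (x + 1))^2)) * (2 * (1 - (s / (x + 1))^2))
        < (3 * (1 - (e / x)^2)) * (3 * (1 - (s / x)^2))"
      by (rule mult_strict_mono[OF e_bound s_bound])
    then have "sqrt (4 * ((1 - (e / (x + 1))^2) * (1 - (s / (x + 1))^2)))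
        < sqrt (9 * ((1 - (e / x)^2) * (1 - (s / x)^2)))"
      by (simp add: algebra_simps)
    then show ?thesis
      by (simp add: real_sqrt_mult)
  qed
  ultimately show ?thesis by linarith
qed

lemma gam_eq_normalized:
  assumes "rho k a b \<noteq> 0"
  shows "gam j k a b = real_of_int j * sqrt ((1 - (eta a b / rho k a b)^2) * (1 - (sigma a b / rho k a b)^2))
    - eta a b / rho k a b * (sigma a b / rho k a b)"
proof -
  let ?Q = "(1 - (eta a b / rho k a b)^2) * (1 - (sigma a b / rho k a b)^2)"
  have "(rho k a b^2 - eta a b^2) * (rho k a b^2 - sigma a b^2) = (rho k a b^2)^2 * ?Q"
    using assms by (simp add: power_divide field_simps)
  then have "sqrt ((rho k a b^2 - eta a b^2) * (rho k a b^2 - sigma a b^2)) = rho k a b^2 * sqrt ?Q"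
    by (simp only: real_sqrt_mult real_sqrt_abs abs_power2)
  then show ?thesis
    using assms unfolding gam_def by (simp add: power2_eq_square field_simps)
qed

theorem lemma9:
  fixes k :: nat and \<alpha> \<beta> :: real
  assumes "k \<ge> 1" and "\<alpha> > \<beta>" and "\<beta> > 0"
  shows "{- qq k \<alpha> \<beta> * ss k \<alpha> \<beta>
            - 2/3 * sqrt ((1 - qq k \<alpha> \<beta> ^ 2) * (1 - ss k \<alpha> \<beta> ^ 2))
          .. - qq k \<alpha> \<beta> * ss k \<alpha> \<beta>}
         \<subseteq> {gam (-1) k \<alpha> \<beta> <..< gam 1 k \<alpha> \<beta>}"
proof -
  let ?e = "eta \<alpha> \<beta>" and ?s = "sigma \<alpha> \<beta>" and ?x = "rho k \<alpha> \<beta>"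
  have e: "0 < ?e" "?e < ?s" and x: "?s + 2 \<le> ?x"
    using assms by (auto simp: eta_def sigma_def rho_def rr_def)
  have "rr k \<alpha> \<beta> = ?x + 1" by (simp add: rho_def)
  then have "qq k \<alpha> \<beta> = ?e / (?x + 1)" "ss k \<alpha> \<beta> = ?s / (?x + 1)"
    by (simp_all add: qq_def ss_def)
  moreover have "?x \<noteq> 0" using e x by linarith
  ultimately show ?thesis
    using right_endpoint_less_gamma_plus[OF e x] gamma_minus_less_left_endpoint[OF e x]
    by (auto simp: gam_eq_normalized)
qed

end
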